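(* For all integers $L\ge1$ and $M\ge L+1$, $$\min_{w\in\mathbb{R}^L}\|Bw-\mathbf 1\|_2=\left[\frac{\binom{M+L+1}{L+1}}{\binom{M}{L+1}}-1\right]^{-1/2}.$$ Moreover, there exist absolute constants $0<c_1\le c_2$ such that for all integers $L\ge1$ and $M\ge L+1$, $$\exp\Big(c_1\frac{L^2}{M}\Big)\le\frac{\binom{M+L+1}{L+1}}{\binom{M}{L+1}}\le\exp\Big(c_2\frac{L^2}{M}\Big),$$ i.e. the minimum equals $\big[\exp(\Theta(L^2/M))-1\big]^{-1/2}$.
   Context: $B$ is the $M\times L$ real matrix with entries $B_{ij}=(i/M)^j$ for $1\le i\le M$, $1\le j\le L$; $\mathbf 1$ is the all-ones vector in $\mathbb{R}^M$; $\|\cdot\|_2$ is the Euclidean norm. *)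

theory Defs
  imports "HOL-Analysis.Analysis"
begin

text \<open>Entries of the M x L matrix B: B i j = (i/M)^j, for 1 \<le> i \<le> M, 1 \<le> j \<le> L.\<close>
definition Bmat :: "nat \<Rightarrow> nat \<Rightarrow> nat \<Rightarrow> real" where
  "Bmat M i j = (real i / real M) ^ j"

definition resid :: "nat \<Rightarrow> nat \<Rightarrow> (nat \<Rightarrow> real) \<Rightarrow> real" where
  "resid M L w = sqrt (\<Sum>i=1..M. ((\<Sum>j=1..L. Bmat M i j * w j) - 1)^2)"

definition binom_ratio :: "nat \<Rightarrow> nat \<Rightarrow> real" where
  "binom_ratio M L = real ((M + L + 1) choose (L + 1)) / real (M choose (L + 1))"

end

theory Submission
  imports Defs "HOL-Computational_Algebra.Polynomial"
begin

text \<open>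
  A vector w minimises |B w - 1| as soon as its residual r = B w - 1 is orthogonal to the
  columns of B, and then |r|^2 = - (r_1 + ... + r_M). Such a residual has the form
  r_i = - P(i) / P(0) for a polynomial P of degree at most L with sum_{i=1..M} P(i) i^j = 0
  for 1 <= j <= L, and P is given by a discrete Rodrigues formula: it is the (L+1)-st
  backward difference of H(x) = (x+1)...(x+L) (M-x)(M-1-x)...(M-L-x). Since H vanishes at
  -L, ..., -1 and at M-L, ..., M, this difference does not change on 1, ..., M when H is cut
  off outside [0, M-L-1], and L+1 summations by parts against i^j then give orthogonality
  on 0, ..., M. The values H(0) and H(-L-1) produce the two binomial coefficients.

  The exponential bounds follow from writing the ratio of binomial coefficients as
  prod_{k=0..L} (1 + (L+1)/(M-k)).
\<close>

definition bdiff :: "(int \<Rightarrow> real) \<Rightarrow> int \<Rightarrow> real" where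
  "bdiff f x = f x - f (x - 1)"

definition fdiff :: "(int \<Rightarrow> real) \<Rightarrow> int \<Rightarrow> real" where
  "fdiff f x = f (x + 1) - f x"

lemma bdiff_pow_eq_sum:
  "(bdiff ^^ n) f x = (\<Sum>k\<le>n. (-1) ^ k * real (n choose k) * f (x - int k))"
proof (induction n arbitrary: x)
  case 0
  then show ?case by simp
next
  case (Suc n)
  define t where "t k c = (-1) ^ k * c * f (x - int k)" for k c
  have "(bdiff ^^ Suc n) f x = (\<Sum>k\<le>n. t k (n choose k)) + (\<Sum>k\<le>n. t (Suc k) (n choose k))"
    by (simp add: bdiff_def Suc t_def sum_negf algebra_simps)
  also have "(\<Sum>k\<le>n. t k (n choose k)) = t 0 1 + (\<Sum>k\<le>n. t (Suc k) (n choose Suc k))"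
    using sum.atMost_Suc_shift[of "\<lambda>k. t k (n choose k)" n] by (simp add: t_def binomial_eq_0)
  also have "t 0 1 + (\<Sum>k\<le>n. t (Suc k) (n choose Suc k)) + (\<Sum>k\<le>n. t (Suc k) (n choose k))
      = (\<Sum>k\<le>Suc n. t k (Suc n choose k))"
    by (simp add: sum.atMost_Suc_shift t_def sum.distrib[symmetric] algebra_simps del: sum.atMost_Suc)
  finally show ?case by (simp add: t_def binomial_eq_0)
qed

lemma bdiff_pow_cong:
  "(\<And>k. k \<le> n \<Longrightarrow> f (x - int k) = g (x - int k)) \<Longrightarrow> (bdiff ^^ n) f x = (bdiff ^^ n) g x"
  by (simp add: bdiff_pow_eq_sum)

lemma bdiff_pow_eq_0_outside:
  assumes "\<And>y. y < a \<or> b < y \<Longrightarrow> f y = 0" and "x < a \<or> b + int n < x"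
  shows "(bdiff ^^ n) f x = 0"
  using assms by (auto simp: bdiff_pow_eq_sum intro!: sum.neutral)

lemma bdiff_pow_gap:
  assumes "0 < n" and "\<And>k. 0 < k \<Longrightarrow> k < n \<Longrightarrow> f (x - int k) = 0"
  shows "(bdiff ^^ n) f x = f x + (-1) ^ n * f (x - int n)"
proof -
  obtain m where n: "n = Suc m" using assms(1) by (cases n) auto
  define t where "t k = (-1) ^ k * real (n choose k) * f (x - int k)" for k
  have "(bdiff ^^ n) f x = (\<Sum>k\<le>Suc m. t k)"
    unfolding bdiff_pow_eq_sum t_def n ..
  also have "\<dots> = t 0 + ((\<Sum>k<m. t (Suc k)) + t n)"
    by (subst sum.atMost_Suc_shift) (simp only: lessThan_Suc_atMost[symmetric] sum.lessThan_Suc n)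
  also have "(\<Sum>k<m. t (Suc k)) = 0"
  proof (intro sum.neutral ballI)
    fix k assume "k \<in> {..<m}"
    then show "t (Suc k) = 0"
      using assms(2)[of "Suc k"] by (simp add: t_def n)
  qed
  finally show ?thesis by (simp add: t_def)
qed

lemma bdiff_pow_eq_fdiff_pow:
  "(bdiff ^^ n) f x = (fdiff ^^ n) f (x - int n)"
proof (induction n arbitrary: x)
  case 0
  then show ?case by simp
next
  case (Suc n)
  then show ?case by (simp add: bdiff_def fdiff_def algebra_simps)
qed

lemma sum_bdiff_mult:
  assumes "A - 1 \<le> B"
  shows "(\<Sum>i=A..B. bdiff g i * s i) =
    g B * s (B + 1) - g (A - 1) * s A - (\<Sum>i=A..B. g i * fdiff s i)"
  using assms
proof (induction B rule: int_ge_induct)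
  case base
  then show ?case by simp
next
  case (step B)
  have "{A..B + 1} = insert (B + 1) {A..B}"
    using step.hyps by auto
  then show ?case
    using step.IH by (simp add: bdiff_def fdiff_def algebra_simps)
qed

lemma sum_bdiff_pow_mult:
  assumes "\<And>x. x < a \<or> b < x \<Longrightarrow> g x = 0" and "A \<le> a" "a \<le> b" "b + int n \<le> B"
  shows "(\<Sum>i=A..B. (bdiff ^^ n) g i * s i) = (-1) ^ n * (\<Sum>i=A..B. g i * (fdiff ^^ n) s i)"
  using assms(4)
proof (induction n arbitrary: s)
  case 0
  then show ?case by simp
next
  case (Suc n)
  have "(bdiff ^^ n) g B = 0" "(bdiff ^^ n) g (A - 1) = 0"
    using Suc.prems assms(2) by (auto intro: bdiff_pow_eq_0_outside[OF assms(1)])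
  then have "(\<Sum>i=A..B. (bdiff ^^ Suc n) g i * s i) = - (\<Sum>i=A..B. (bdiff ^^ n) g i * fdiff s i)"
    using sum_bdiff_mult[of A B "(bdiff ^^ n) g" s] Suc.prems assms(2,3) by simp
  also have "\<dots> = (-1) ^ Suc n * (\<Sum>i=A..B. g i * (fdiff ^^ Suc n) s i)"
    using Suc.IH[of "fdiff s"] Suc.prems by (simp add: funpow_Suc_right del: funpow.simps)
  finally show ?case .
qed

definition poly_fdiff :: "'a::comm_ring_1 poly \<Rightarrow> 'a poly" where
  "poly_fdiff p = pcompose p [:1, 1:] - p"

lemma poly_poly_fdiff: "poly (poly_fdiff p) x = poly p (x + 1) - poly p x"
  by (simp add: poly_fdiff_def poly_pcompose add.commute)

lemma degree_poly_fdiff: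
  fixes p :: "'a::idom poly"
  shows "degree (poly_fdiff p) \<le> degree p - 1"
proof (rule degree_le, intro allI impI)
  fix i assume i: "degree p - 1 < i"
  have deg: "degree (pcompose p [:1, 1:]) = degree p"
    by (simp add: degree_pcompose)
  show "coeff (poly_fdiff p) i = 0"
  proof (cases "i = degree p")
    case True
    then show ?thesis
      using lead_coeff_comp[of "[:1, 1:]" p] deg by (simp add: poly_fdiff_def)
  next
    case False
    then show ?thesis
      using i deg by (simp add: poly_fdiff_def coeff_eq_0)
  qed
qed

lemma degree_poly_fdiff_pow:
  fixes p :: "'a::idom poly"
  shows "degree ((poly_fdiff ^^ n) p) \<le> degree p - n"
proof (induction n)
  case 0
  then show ?case by simp
next
  case (Suc n)
  then show ?case
    using degree_poly_fdiff[of "(poly_fdiff ^^ n) p"] by simp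
qed

lemma poly_fdiff_pow_eq_0:
  fixes p :: "'a::idom poly"
  assumes "degree p < n"
  shows "(poly_fdiff ^^ n) p = 0"
proof -
  obtain m where n: "n = Suc m" using assms by (cases n) auto
  have "degree ((poly_fdiff ^^ m) p) = 0"
    using degree_poly_fdiff_pow[of m p] assms n by simp
  then obtain c where "(poly_fdiff ^^ m) p = [:c:]"
    by (metis degree_eq_zeroE)
  then show ?thesis by (simp add: n poly_fdiff_def)
qed

lemma fdiff_pow_poly:
  "(fdiff ^^ n) (\<lambda>i. poly p (of_int i)) = (\<lambda>i. poly ((poly_fdiff ^^ n) p) (of_int i))"
  by (induction n) (simp_all add: fdiff_def poly_poly_fdiff)

lemma fdiff_pow_power_eq_0:
  assumes "j < n"
  shows "(fdiff ^^ n) (\<lambda>i. of_int i ^ j) = (\<lambda>_. 0)"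
  using fdiff_pow_poly[of n "monom 1 j"] poly_fdiff_pow_eq_0[of "monom (1::real) j" n] assms
  by (simp add: poly_monom degree_monom_eq)

lemma bdiff_pow_poly:
  "(bdiff ^^ n) (\<lambda>i. poly p (of_int i)) x = poly (pcompose ((poly_fdiff ^^ n) p) [:- of_nat n, 1:]) (of_int x)"
  by (simp add: bdiff_pow_eq_fdiff_pow fdiff_pow_poly poly_pcompose)


lemma bdiff_pow_orthogonal_power:
  assumes "\<And>x. x < a \<or> b < x \<Longrightarrow> h x = 0" and "A \<le> a" "a \<le> b" "b + int n \<le> B"
    and "j < n"
  shows "(\<Sum>i=A..B. (bdiff ^^ n) h i * of_int i ^ j) = 0"
  using sum_bdiff_pow_mult[OF assms(1-4), where s = "\<lambda>i. of_int i ^ j"] fdiff_pow_power_eq_0[OF assms(5)]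
  by simp

lemma prod_diff_eq_fact_binomial:
  "(\<Prod>k=0..L. real M - real k) = fact (L + 1) * real (M choose (L + 1))"
proof -
  have "fact (L + 1) * real (M choose (L + 1)) = fact (L + 1) * (real M gchoose (L + 1))"
    by (simp add: binomial_gbinomial)
  also have "\<dots> = (\<Prod>k=0..<L + 1. real M - of_nat k)"
    by (rule gbinomial_mult_fact)
  also have "{0..<L + 1} = {0..L}" by auto
  finally show ?thesis by simp
qed

definition rodrigues_poly :: "nat \<Rightarrow> nat \<Rightarrow> real poly" where
  "rodrigues_poly M L = (\<Prod>k=1..L. [:real k, 1:]) * (\<Prod>k=0..L. [:real M - real k, -1:])"

lemma poly_rodrigues_poly:
  "poly (rodrigues_poly M L) x = (\<Prod>k=1..L. real k + x) * (\<Prod>k=0..L. real M - real k - x)"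
  by (simp add: rodrigues_poly_def poly_prod)

lemma degree_rodrigues_poly: "degree (rodrigues_poly M L) \<le> 2 * L + 1"
proof -
  have "degree (\<Prod>k=1..L. [:real k, 1:]) \<le> L"
    using degree_prod_sum_le[of "{1..L}" "\<lambda>k. [:real k, 1:]"] by (simp add: o_def)
  moreover have "degree (\<Prod>k=0..L. [:real M - real k, -1:]) \<le> L + 1"
    using degree_prod_sum_le[of "{0..L}" "\<lambda>k. [:real M - real k, -1:]"] by (simp add: o_def)
  ultimately show ?thesis
    using degree_mult_le[of "\<Prod>k=1..L. [:real k, 1:]" "\<Prod>k=0..L. [:real M - real k, -1:]"]
    unfolding rodrigues_poly_def by linarith
qed

lemma rodrigues_poly_root:
  assumes "- int L \<le> y \<and> y \<le> -1 \<or> int M - int L \<le> y \<and> y \<le> int M"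
  shows "poly (rodrigues_poly M L) (of_int y) = 0"
  using assms
proof
  assume y: "- int L \<le> y \<and> y \<le> -1"
  have "(\<Prod>k=1..L. real k + of_int y) = 0"
    by (rule prod_zero) (use y in \<open>auto intro!: bexI[of _ "nat (- y)"]\<close>)
  then show ?thesis by (simp add: poly_rodrigues_poly)
next
  assume y: "int M - int L \<le> y \<and> y \<le> int M"
  have "(\<Prod>k=0..L. real M - real k - of_int y) = 0"
    by (rule prod_zero) (use y in \<open>auto intro!: bexI[of _ "nat (int M - y)"]\<close>)
  then show ?thesis by (simp add: poly_rodrigues_poly)
qed

lemma rodrigues_poly_at_0:
  "poly (rodrigues_poly M L) 0 = fact L * fact (L + 1) * real (M choose (L + 1))"
  by (simp add: poly_rodrigues_poly prod_diff_eq_fact_binomial fact_prod)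

lemma rodrigues_poly_at_neg:
  "poly (rodrigues_poly M L) (- real (L + 1)) =
     (-1) ^ L * fact L * fact (L + 1) * real ((M + L + 1) choose (L + 1))"
proof -
  have "(\<Prod>k=1..L. real k - real (L + 1)) = (\<Prod>k=1..L. - real (L + 1 - k))"
    by (rule prod.cong) auto
  also have "\<dots> = (-1) ^ L * (\<Prod>k=1..L. real (L + 1 - k))"
    by (simp only: prod_uminus card_atLeastAtMost) simp
  also have "(\<Prod>k=1..L. real (L + 1 - k)) = (\<Prod>k=1..L. real k)"
    using prod.atLeastAtMost_rev[of "\<lambda>k. real k" 1 L] by (simp add: add.commute)
  finally have "(\<Prod>k=1..L. real k - real (L + 1)) = (-1) ^ L * fact L"
    by (simp add: fact_prod)
  have "poly (rodrigues_poly M L) (- real (L + 1)) =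
      (\<Prod>k=1..L. real k - real (L + 1)) * (\<Prod>k=0..L. real (M + L + 1) - real k)"
    unfolding poly_rodrigues_poly by (intro arg_cong2[where f = "(*)"] prod.cong) auto
  also have "\<dots> = (-1) ^ L * fact L * (fact (L + 1) * real ((M + L + 1) choose (L + 1)))"
    by (simp only: \<open>(\<Prod>k=1..L. real k - real (L + 1)) = (-1) ^ L * fact L\<close>
        prod_diff_eq_fact_binomial)
  finally show ?thesis by (simp only: mult.assoc)
qed

definition rodrigues_trunc :: "nat \<Rightarrow> nat \<Rightarrow> int \<Rightarrow> real" where
  "rodrigues_trunc M L i =
    (if 0 \<le> i \<and> i \<le> int M - int L - 1 then poly (rodrigues_poly M L) (of_int i) else 0)"

definition orthogonal_poly :: "nat \<Rightarrow> nat \<Rightarrow> real poly" where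
  "orthogonal_poly M L = pcompose ((poly_fdiff ^^ (L + 1)) (rodrigues_poly M L)) [:- real (L + 1), 1:]"

lemma degree_orthogonal_poly: "degree (orthogonal_poly M L) \<le> L"
  using degree_poly_fdiff_pow[of "L + 1" "rodrigues_poly M L"] degree_rodrigues_poly[of M L]
  by (simp add: orthogonal_poly_def degree_pcompose)

lemma bdiff_pow_rodrigues_poly:
  "(bdiff ^^ (L + 1)) (\<lambda>i. poly (rodrigues_poly M L) (of_int i)) x = poly (orthogonal_poly M L) (of_int x)"
  unfolding orthogonal_poly_def bdiff_pow_poly by simp

lemma bdiff_pow_rodrigues_trunc:
  assumes "1 \<le> i" "i \<le> int M"
  shows "(bdiff ^^ (L + 1)) (rodrigues_trunc M L) i = poly (orthogonal_poly M L) (of_int i)"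
proof -
  have "(bdiff ^^ (L + 1)) (rodrigues_trunc M L) i =
      (bdiff ^^ (L + 1)) (\<lambda>i. poly (rodrigues_poly M L) (of_int i)) i"
  proof (rule bdiff_pow_cong)
    fix k assume "k \<le> L + 1"
    then have "0 \<le> i - k \<and> i - k \<le> int M - int L - 1 \<or> - int L \<le> i - k \<and> i - k \<le> -1 \<or>
        int M - int L \<le> i - k \<and> i - k \<le> int M"
      using assms by auto
    then show "rodrigues_trunc M L (i - int k) = poly (rodrigues_poly M L) (of_int (i - int k))"
      using rodrigues_poly_root[of L "i - int k" M] by (auto simp: rodrigues_trunc_def)
  qed
  then show ?thesis by (simp only: bdiff_pow_rodrigues_poly)
qed

lemma bdiff_pow_rodrigues_trunc_0:
  assumes "L + 1 \<le> M"
  shows "(bdiff ^^ (L + 1)) (rodrigues_trunc M L) 0 = poly (rodrigues_poly M L) 0"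
  using bdiff_pow_gap[of "L + 1" "rodrigues_trunc M L" 0] assms by (simp add: rodrigues_trunc_def)

lemma orthogonal_poly_at_0:
  "poly (orthogonal_poly M L) 0 =
    fact L * fact (L + 1) * (real (M choose (L + 1)) - real ((M + L + 1) choose (L + 1)))"
proof -
  let ?H = "rodrigues_poly M L"
  have "poly ?H (of_int (0 - int k)) = 0" if "0 < k" "k < L + 1" for k
    using rodrigues_poly_root[of L "0 - int k" M] that by simp
  then have "poly (orthogonal_poly M L) 0 = poly ?H 0 + (-1) ^ (L + 1) * poly ?H (- real (L + 1))"
    using bdiff_pow_gap[of "L + 1" "\<lambda>i. poly ?H (of_int i)" 0] bdiff_pow_rodrigues_poly[of L M 0]
    by simp
  moreover have "(-1::real) ^ (L + 1) * (-1) ^ L = -1"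
    by (simp flip: power_add)
  then have "(-1) ^ (L + 1) * poly ?H (- real (L + 1)) =
      - (fact L * fact (L + 1) * real ((M + L + 1) choose (L + 1)))"
    unfolding rodrigues_poly_at_neg by (simp only: mult.assoc[symmetric])
  ultimately show ?thesis
    by (simp add: rodrigues_poly_at_0 right_diff_distrib)
qed

lemma sum_int_atLeastAtMost_0:
  "(\<Sum>i=0..int M. F i) = F 0 + (\<Sum>i=1..M. F (int i))"
proof -
  have "(\<Sum>i=0..int M. F i) = (\<Sum>i\<in>int ` {0..M}. F i)"
    by (simp add: image_int_atLeastAtMost)
  also have "\<dots> = (\<Sum>i=0..M. F (int i))"
    by (simp add: sum.reindex)
  also have "\<dots> = F 0 + (\<Sum>i=1..M. F (int i))"
    by (simp add: sum.atLeast_Suc_atMost)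
  finally show ?thesis .
qed

lemma sum_orthogonal_poly_mult_power:
  assumes "L + 1 \<le> M" "j \<le> L"
  shows "poly (rodrigues_poly M L) 0 * 0 ^ j + (\<Sum>i=1..M. poly (orthogonal_poly M L) (real i) * real i ^ j) = 0"
proof -
  have "(\<Sum>i=0..int M. (bdiff ^^ (L + 1)) (rodrigues_trunc M L) i * of_int i ^ j) = 0"
    by (rule bdiff_pow_orthogonal_power[of 0 "int M - int L - 1"])
      (use assms in \<open>auto simp: rodrigues_trunc_def\<close>)
  then show ?thesis
    using assms bdiff_pow_rodrigues_trunc bdiff_pow_rodrigues_trunc_0
    by (simp add: sum_int_atLeastAtMost_0)
qed

lemma binom_ratio_eq_prod:
  assumes "L + 1 \<le> M"
  shows "binom_ratio M L = (\<Prod>k=0..L. 1 + real (L + 1) / (real M - real k))"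
proof -
  have "binom_ratio M L =
      fact (L + 1) * real ((M + L + 1) choose (L + 1)) / (fact (L + 1) * real (M choose (L + 1)))"
    by (simp add: binom_ratio_def)
  also have "\<dots> = (\<Prod>k=0..L. real (M + L + 1) - real k) / (\<Prod>k=0..L. real M - real k)"
    by (simp only: prod_diff_eq_fact_binomial)
  also have "\<dots> = (\<Prod>k=0..L. 1 + real (L + 1) / (real M - real k))"
    unfolding prod_dividef[symmetric] using assms by (intro prod.cong) (auto simp: field_simps)
  finally show ?thesis .
qed

lemma exp_half_le_1_plus:
  fixes x :: real
  assumes "0 \<le> x" "x \<le> 1"
  shows "exp (x / 2) \<le> 1 + x"
proof -
  have pos: "0 < 1 - x / 2" using assms by simp
  have "exp (x / 2) = 1 / exp (- (x / 2))" by (simp add: exp_minus field_simps)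
  also have "\<dots> \<le> 1 / (1 - x / 2)"
    using exp_ge_add_one_self[of "- (x / 2)"] pos by (intro divide_left_mono) auto
  also have "\<dots> \<le> 1 + x"
    using assms pos mult_left_le_one_le[of x x] by (simp add: divide_le_eq algebra_simps)
  finally show ?thesis .
qed

lemma binom_ratio_lower_bound:
  assumes "L + 1 \<le> M"
  shows "exp (1 / 2 * real L ^ 2 / real M) \<le> binom_ratio M L"
proof -
  define x where "x = real (L + 1) / real M"
  have x: "0 \<le> x" "x \<le> 1" using assms by (auto simp: x_def)
  have "1 / 2 * real L ^ 2 / real M \<le> real (L + 1) * (x / 2)"
    using assms by (simp add: x_def power2_eq_square field_simps)
  then have "exp (1 / 2 * real L ^ 2 / real M) \<le> exp (real (L + 1) * (x / 2))"
    by simp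
  also have "\<dots> = exp (x / 2) ^ (L + 1)"
    by (rule exp_of_nat_mult)
  also have "\<dots> \<le> (1 + x) ^ (L + 1)"
    using exp_half_le_1_plus[OF x] by (intro power_mono) auto
  also have "\<dots> = (\<Prod>k=0..L. 1 + x)" by simp
  also have "\<dots> \<le> (\<Prod>k=0..L. 1 + real (L + 1) / (real M - real k))"
    using assms x unfolding x_def by (intro prod_mono conjI add_left_mono divide_left_mono) auto
  also have "\<dots> = binom_ratio M L"
    using binom_ratio_eq_prod[OF assms] by simp
  finally show ?thesis .
qed

lemma binom_ratio_gt_1:
  assumes "1 \<le> L" "L + 1 \<le> M"
  shows "1 < binom_ratio M L"
proof -
  have "0 < 1 / 2 * real L ^ 2 / real M" using assms by simp
  then show ?thesis
    using binom_ratio_lower_bound[OF assms(2)] by (meson one_less_exp_iff less_le_trans)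
qed

lemma binom_ratio_upper_bound_large:
  assumes "2 * L + 2 \<le> M"
  shows "binom_ratio M L \<le> exp (2 * real (L + 1) ^ 2 / real M)"
proof -
  have "binom_ratio M L = (\<Prod>k=0..L. 1 + real (L + 1) / (real M - real k))"
    using binom_ratio_eq_prod assms by simp
  also have "\<dots> \<le> (\<Prod>k=0..L. exp (2 * real (L + 1) / real M))"
  proof (rule prod_mono)
    fix k assume "k \<in> {0..L}"
    then have k: "real M \<le> 2 * (real M - real k)" "0 < real M - real k"
      using assms by auto
    have "real (L + 1) / (real M - real k) = 2 * real (L + 1) / (2 * (real M - real k))"
      by (rule mult_divide_mult_cancel_left[symmetric]) simp
    also have "\<dots> \<le> 2 * real (L + 1) / real M"
      using k by (intro divide_left_mono) auto
    finally have "exp (real (L + 1) / (real M - real k)) \<le> exp (2 * real (L + 1) / real M)"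
      by simp
    then have "1 + real (L + 1) / (real M - real k) \<le> exp (2 * real (L + 1) / real M)"
      using exp_ge_add_one_self[of "real (L + 1) / (real M - real k)"] by linarith
    then show "0 \<le> 1 + real (L + 1) / (real M - real k) \<and>
        1 + real (L + 1) / (real M - real k) \<le> exp (2 * real (L + 1) / real M)"
      using k by simp
  qed
  also have "\<dots> = exp (2 * real (L + 1) / real M) ^ (L + 1)"
    by simp
  also have "\<dots> = exp (real (L + 1) * (2 * real (L + 1) / real M))"
    by (rule exp_of_nat_mult[symmetric])
  also have "\<dots> = exp (2 * real (L + 1) ^ 2 / real M)"
    by (simp add: power2_eq_square)
  finally show ?thesis .
qed

lemma binom_ratio_upper_bound_small:
  assumes "1 \<le> L" "L + 1 \<le> M" "M \<le> 2 * L + 1"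
  shows "binom_ratio M L \<le> exp (5 * real L)"
proof -
  have "0 < M choose (L + 1)"
    using assms(2) by (rule zero_less_binomial)
  then have "1 \<le> real (M choose (L + 1))"
    by linarith
  then have "binom_ratio M L \<le> real ((M + L + 1) choose (L + 1)) / 1"
    unfolding binom_ratio_def using assms by (intro divide_left_mono) auto
  also have "\<dots> \<le> 2 ^ (M + L + 1)"
    using binomial_le_pow2[of "M + L + 1" "L + 1"] by (metis div_by_1 of_nat_le_iff of_nat_numeral of_nat_power)
  also have "(2::real) ^ (M + L + 1) \<le> 2 ^ (5 * L)"
    using assms by (intro power_increasing) auto
  also have "\<dots> \<le> exp 1 ^ (5 * L)"
    using exp_ge_add_one_self[of 1] by (intro power_mono) auto
  also have "\<dots> = exp (5 * real L)"
    by (simp add: exp_of_nat_mult[symmetric])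
  finally show ?thesis .
qed

lemma binom_ratio_upper_bound:
  assumes "1 \<le> L" "L + 1 \<le> M"
  shows "binom_ratio M L \<le> exp (15 * real L ^ 2 / real M)"
proof -
  have M: "0 < real M" using assms by simp
  have "1 \<le> real L" using assms(1) by simp
  then have L: "real L \<le> real L ^ 2" "1 \<le> real L ^ 2"
    unfolding power2_eq_square using mult_left_mono[of 1 "real L" "real L"] mult_mono[of 1 "real L" 1 "real L"]
    by auto
  show ?thesis
  proof (cases "2 * L + 2 \<le> M")
    case True
    have "2 * real (L + 1) ^ 2 \<le> 15 * real L ^ 2"
      using L by (simp add: power2_eq_square algebra_simps)
    then have "2 * real (L + 1) ^ 2 / real M \<le> 15 * real L ^ 2 / real M"
      using M by (simp add: divide_right_mono)
    then have "exp (2 * real (L + 1) ^ 2 / real M) \<le> exp (15 * real L ^ 2 / real M)"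
      by simp
    with binom_ratio_upper_bound_large[OF True] show ?thesis
      by linarith
  next
    case False
    then have "M \<le> 2 * L + 1" by simp
    then have "5 * real L * real M \<le> 5 * real L * (2 * real L + 1)"
      by (intro mult_left_mono) auto
    also have "\<dots> \<le> 15 * real L ^ 2"
      using L by (simp add: power2_eq_square algebra_simps)
    finally have "exp (5 * real L) \<le> exp (15 * real L ^ 2 / real M)"
      using M by (simp add: pos_le_divide_eq)
    with binom_ratio_upper_bound_small[OF assms \<open>M \<le> 2 * L + 1\<close>] show ?thesis
      by linarith
  qed
qed

lemma orthogonal_residual_sum_sq:
  fixes A :: "'i \<Rightarrow> 'j \<Rightarrow> real"
  assumes "\<And>i. i \<in> I \<Longrightarrow> (\<Sum>j\<in>J. A i j * w0 j) - b i = r i"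
    and "\<And>c. (\<Sum>i\<in>I. r i * (\<Sum>j\<in>J. A i j * c j)) = 0"
  shows "(\<Sum>i\<in>I. (r i)\<^sup>2) = - (\<Sum>i\<in>I. r i * b i)"
proof -
  have "(\<Sum>i\<in>I. (r i)\<^sup>2) = (\<Sum>i\<in>I. r i * ((\<Sum>j\<in>J. A i j * w0 j) - b i))"
    using assms(1) by (simp add: power2_eq_square)
  also have "\<dots> = - (\<Sum>i\<in>I. r i * b i)"
    using assms(2)[of w0] by (simp add: right_diff_distrib sum_subtractf)
  finally show ?thesis .
qed

lemma orthogonal_residual_le:
  fixes A :: "'i \<Rightarrow> 'j \<Rightarrow> real"
  assumes "\<And>i. i \<in> I \<Longrightarrow> (\<Sum>j\<in>J. A i j * w0 j) - b i = r i"
    and "\<And>c. (\<Sum>i\<in>I. r i * (\<Sum>j\<in>J. A i j * c j)) = 0"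
  shows "(\<Sum>i\<in>I. (r i)\<^sup>2) \<le> (\<Sum>i\<in>I. ((\<Sum>j\<in>J. A i j * w j) - b i)\<^sup>2)"
proof -
  define e where "e i = (\<Sum>j\<in>J. A i j * (w j - w0 j))" for i
  have "(\<Sum>j\<in>J. A i j * w j) - b i = r i + e i" if "i \<in> I" for i
    using assms(1)[OF that] by (simp add: e_def right_diff_distrib sum_subtractf)
  then have "(\<Sum>i\<in>I. ((\<Sum>j\<in>J. A i j * w j) - b i)\<^sup>2) = (\<Sum>i\<in>I. (r i + e i)\<^sup>2)"
    by (intro sum.cong) auto
  also have "\<dots> = (\<Sum>i\<in>I. (r i)\<^sup>2) + 2 * (\<Sum>i\<in>I. r i * e i) + (\<Sum>i\<in>I. (e i)\<^sup>2)"
    by (simp add: power2_sum sum.distrib sum_distrib_left mult.assoc)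
  also have "(\<Sum>i\<in>I. r i * e i) = 0"
    unfolding e_def by (rule assms(2))
  finally show ?thesis
    by (simp add: sum_nonneg)
qed

lemma poly_eq_coeff_0_plus_sum:
  fixes p :: "'a::comm_semiring_1 poly"
  assumes "degree p \<le> n"
  shows "poly p x = poly p 0 + (\<Sum>j=1..n. coeff p j * x ^ j)"
proof -
  have "poly p x = (\<Sum>j\<le>degree p. coeff p j * x ^ j)"
    by (rule poly_altdef)
  also have "\<dots> = (\<Sum>j\<le>n. coeff p j * x ^ j)"
    using assms by (intro sum.mono_neutral_left) (auto simp: coeff_eq_0)
  also have "\<dots> = coeff p 0 + (\<Sum>j=1..n. coeff p j * x ^ j)"
    by (simp add: atMost_atLeast0 sum.atLeast_Suc_atMost)
  finally show ?thesis by (simp add: poly_0_coeff_0)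
qed

lemma resid_poly_minimizer:
  fixes P :: "real poly"
  assumes "degree P \<le> L" "poly P 0 \<noteq> 0" "0 < M"
    and orth: "\<forall>j\<in>{1..L}. (\<Sum>i=1..M. poly P (real i) * real i ^ j) = 0"
  defines "w0 \<equiv> \<lambda>j. - coeff P j * real M ^ j / poly P 0"
  shows "resid M L w0 = sqrt ((\<Sum>i=1..M. poly P (real i)) / poly P 0)"
    and "resid M L w0 \<le> resid M L w"
proof -
  define r where "r i = - poly P (real i) / poly P 0" for i
  have residual: "(\<Sum>j=1..L. Bmat M i j * w0 j) - 1 = r i" for i
  proof -
    have "(\<Sum>j=1..L. Bmat M i j * w0 j) = - (\<Sum>j=1..L. coeff P j * real i ^ j) / poly P 0"
      using assms(3) by (simp add: Bmat_def w0_def power_divide sum_divide_distrib sum_negf mult.commute)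
    then show ?thesis
      using poly_eq_coeff_0_plus_sum[OF assms(1), of "real i"] assms(2) by (simp add: r_def field_simps)
  qed
  have orthogonal: "(\<Sum>i=1..M. r i * (\<Sum>j=1..L. Bmat M i j * c j)) = 0" for c
  proof -
    have "(\<Sum>i=1..M. r i * (\<Sum>j=1..L. Bmat M i j * c j)) =
        (\<Sum>i=1..M. \<Sum>j=1..L. - c j / (poly P 0 * real M ^ j) * (poly P (real i) * real i ^ j))"
      unfolding sum_distrib_left
      by (intro sum.cong refl) (simp add: r_def Bmat_def power_divide)
    also have "\<dots> = (\<Sum>j=1..L. - c j / (poly P 0 * real M ^ j) * (\<Sum>i=1..M. poly P (real i) * real i ^ j))"
      unfolding sum_distrib_left by (rule sum.swap)
    also have "\<dots> = 0"
      using orth by simp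
    finally show ?thesis .
  qed
  have "(\<Sum>i=1..M. (r i)\<^sup>2) = (\<Sum>i=1..M. poly P (real i)) / poly P 0"
    using orthogonal_residual_sum_sq[of "{1..M}", OF residual orthogonal]
    by (simp add: r_def sum_divide_distrib sum_negf)
  then show "resid M L w0 = sqrt ((\<Sum>i=1..M. poly P (real i)) / poly P 0)"
    unfolding resid_def residual by simp
  show "resid M L w0 \<le> resid M L w"
    unfolding resid_def residual
    by (rule real_sqrt_le_mono) (rule orthogonal_residual_le[of "{1..M}", OF residual orthogonal])
qed

lemma powr_neg_half_eq_sqrt_inverse:
  fixes x :: real
  assumes "0 < x"
  shows "x powr (-1/2) = sqrt (inverse x)"
proof -
  have "x powr (-1/2) = inverse (x powr (1/2))"
    using powr_minus[of x "1/2"] by simp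
  then show ?thesis
    using assms by (simp add: powr_half_sqrt real_sqrt_inverse)
qed

lemma resid_minimum:
  assumes "1 \<le> L" "L + 1 \<le> M"
  shows "(\<exists>w. resid M L w = (binom_ratio M L - 1) powr (-1/2)) \<and>
    (\<forall>w. (binom_ratio M L - 1) powr (-1/2) \<le> resid M L w)"
proof -
  define K :: real where "K = fact L * fact (L + 1)"
  define C1 where "C1 = real (M choose (L + 1))"
  define C2 where "C2 = real ((M + L + 1) choose (L + 1))"
  define P where "P = orthogonal_poly M L"
  have orth: "\<forall>j\<in>{1..L}. (\<Sum>i=1..M. poly P (real i) * real i ^ j) = 0"
  proof
    fix j assume "j \<in> {1..L}"
    then show "(\<Sum>i=1..M. poly P (real i) * real i ^ j) = 0"
      using sum_orthogonal_poly_mult_power[OF assms(2), of j] by (simp add: P_def zero_power)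
  qed
  have sum: "(\<Sum>i=1..M. poly P (real i)) = - (K * C1)"
    using sum_orthogonal_poly_mult_power[OF assms(2), of 0]
    by (simp add: P_def K_def C1_def rodrigues_poly_at_0)
  have at_0: "poly P 0 = K * (C1 - C2)"
    by (simp add: P_def K_def C1_def C2_def orthogonal_poly_at_0)
  have ratio: "binom_ratio M L = C2 / C1"
    by (simp only: binom_ratio_def C1_def C2_def)
  have "0 < K" "0 < C1" using assms(2) by (simp_all add: K_def C1_def)
  moreover have "1 < C2 / C1"
    using binom_ratio_gt_1[OF assms] by (simp only: ratio)
  ultimately have C: "0 < K" "0 < C1" "C1 < C2" by (simp_all add: less_divide_eq)
  have "poly P 0 \<noteq> 0" using C by (simp add: at_0)
  moreover have "(\<Sum>i=1..M. poly P (real i)) / poly P 0 = inverse (binom_ratio M L - 1)"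
    unfolding sum at_0 ratio using C by (simp add: field_simps)
  moreover have "(binom_ratio M L - 1) powr (-1/2) = sqrt (inverse (binom_ratio M L - 1))"
    using binom_ratio_gt_1[OF assms] by (intro powr_neg_half_eq_sqrt_inverse) simp
  moreover have "0 < M" using assms by simp
  ultimately show ?thesis
    using resid_poly_minimizer[OF degree_orthogonal_poly[of M L, folded P_def] _ _ orth] by metis
qed

theorem lemma1:
  shows "(\<forall>L M. L \<ge> 1 \<longrightarrow> M \<ge> L + 1 \<longrightarrow>
            (\<exists>w. resid M L w = (binom_ratio M L - 1) powr (-1/2)) \<and>
            (\<forall>w. (binom_ratio M L - 1) powr (-1/2) \<le> resid M L w))
       \<and> (\<exists>c1 c2::real. 0 < c1 \<and> c1 \<le> c2 \<and>
            (\<forall>L M::nat. L \<ge> 1 \<longrightarrow> M \<ge> L + 1 \<longrightarrow>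
               exp (c1 * real L ^ 2 / real M) \<le> binom_ratio M L \<and>
               binom_ratio M L \<le> exp (c2 * real L ^ 2 / real M)))"
  using resid_minimum binom_ratio_lower_bound binom_ratio_upper_bound
  by (intro conjI exI[of _ "1/2"] exI[of _ 15]) auto

end
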